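(* Let $(\mathsf C,\mathrm W)$ be a 2-weighted 2-category. Then the interleaving distance $d_{\mathsf C,\mathrm W}$ is an extended pseudometric on the class of objects $\mathsf C_0$.
   Context: A Lawvere 2-weight on a (strict) 2-category $\mathsf C$ is a pair $\mathrm W=(\mathrm W_1,\mathrm W_2)$ of functions $\mathrm W_1$ from 1-morphisms to $\mathbb R_{\ge0}$ and $\mathrm W_2$ from 2-morphisms to $\mathbb R_{\ge0}$ such that $\mathrm W_1(1_A)=0$ for all objects $A$, $\mathrm W_2(1_f)=0$ for all 1-morphisms $f$, $\mathrm W_1(gf)\le\mathrm W_1(g)+\mathrm W_1(f)$ for composable 1-morphisms, and for 2-morphisms $\mathrm W_2(\beta\alpha)\le\mathrm W_2(\beta)+\mathrm W_2(\alpha)$ (vertical composition) and $\mathrm W_2(\gamma\bullet\alpha)\le\mathrm W_2(\gamma)+\mathrm W_2(\alpha)$ (horizontal composition). A 2-weighted 2-category is such a pair $(\mathsf C,\mathrm W)$. For $A,B\in\mathsf C_0$ and $t\ge0$, $A$ and $B$ are $t$-interleaved if there exist 1-morphisms $g:A\to B$, $h:B\to A$ and 2-morphisms $\alpha:1_A\Rightarrow hg$, $\beta:1_B\Rightarrow gh$ with $\max\{\mathrm W_1(g),\mathrm W_1(h),\mathrm W_2(\alpha),\mathrm W_2(\beta)\}\le t$. Then $d_{\mathsf C,\mathrm W}(A,B)=\inf\{t\ge0: A,B\ t\text{-interleaved}\}$, with $\inf\emptyset=\infty$. An extended pseudometric is $[0,\infty]$-valued, zero on the diagonal, symmetric and satisfies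 the triangle inequality. *)

theory Defs
  imports "HOL-Library.Extended_Nonnegative_Real"
begin

text \<open>A strict 2-category, presented with carrier sets of objects, 1-morphisms and
2-morphisms. comp1 g f is the composite of f : A -> B followed by g : B -> C;
vcomp beta alpha is vertical composition (alpha first);
hcomp gamma alpha is horizontal composition with alpha : f => f' (f : A -> B),
gamma : g => g' (g : B -> C), giving gamma . alpha : g f => g' f'.\<close>

record ('o, 'a, 'b) two_cat =
  Ob    :: "'o set"
  Hom1  :: "'a set"
  src1  :: "'a \<Rightarrow> 'o"
  tgt1  :: "'a \<Rightarrow> 'o"
  id1   :: "'o \<Rightarrow> 'a"
  comp1 :: "'a \<Rightarrow> 'a \<Rightarrow> 'a"
  Hom2  :: "'b set"
  src2  :: "'b \<Rightarrow> 'a"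
  tgt2  :: "'b \<Rightarrow> 'a"
  id2   :: "'a \<Rightarrow> 'b"
  vcomp :: "'b \<Rightarrow> 'b \<Rightarrow> 'b"
  hcomp :: "'b \<Rightarrow> 'b \<Rightarrow> 'b"

definition two_category :: "('o, 'a, 'b, 'e) two_cat_scheme \<Rightarrow> bool" where
  "two_category C \<longleftrightarrow>
    \<comment> \<open>underlying 1-category\<close>
    (\<forall>A\<in>Ob C. id1 C A \<in> Hom1 C \<and> src1 C (id1 C A) = A \<and> tgt1 C (id1 C A) = A) \<and>
    (\<forall>f\<in>Hom1 C. src1 C f \<in> Ob C \<and> tgt1 C f \<in> Ob C) \<and>
    (\<forall>f\<in>Hom1 C. \<forall>g\<in>Hom1 C. tgt1 C f = src1 C g \<longrightarrow>
        comp1 C g f \<in> Hom1 C \<and> src1 C (comp1 C g f) = src1 C f \<and> tgt1 C (comp1 C g f) = tgt1 C g) \<and>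
    (\<forall>f\<in>Hom1 C. \<forall>g\<in>Hom1 C. \<forall>h\<in>Hom1 C. tgt1 C f = src1 C g \<longrightarrow> tgt1 C g = src1 C h \<longrightarrow>
        comp1 C h (comp1 C g f) = comp1 C (comp1 C h g) f) \<and>
    (\<forall>f\<in>Hom1 C. comp1 C f (id1 C (src1 C f)) = f \<and> comp1 C (id1 C (tgt1 C f)) f = f) \<and>
    \<comment> \<open>2-morphisms are between parallel 1-morphisms\<close>
    (\<forall>\<alpha>\<in>Hom2 C. src2 C \<alpha> \<in> Hom1 C \<and> tgt2 C \<alpha> \<in> Hom1 C \<and>
        src1 C (src2 C \<alpha>) = src1 C (tgt2 C \<alpha>) \<and> tgt1 C (src2 C \<alpha>) = tgt1 C (tgt2 C \<alpha>)) \<and>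
    \<comment> \<open>vertical structure: each hom is a category\<close>
    (\<forall>f\<in>Hom1 C. id2 C f \<in> Hom2 C \<and> src2 C (id2 C f) = f \<and> tgt2 C (id2 C f) = f) \<and>
    (\<forall>\<alpha>\<in>Hom2 C. \<forall>\<beta>\<in>Hom2 C. tgt2 C \<alpha> = src2 C \<beta> \<longrightarrow>
        vcomp C \<beta> \<alpha> \<in> Hom2 C \<and> src2 C (vcomp C \<beta> \<alpha>) = src2 C \<alpha> \<and> tgt2 C (vcomp C \<beta> \<alpha>) = tgt2 C \<beta>) \<and>
    (\<forall>\<alpha>\<in>Hom2 C. \<forall>\<beta>\<in>Hom2 C. \<forall>\<gamma>\<in>Hom2 C. tgt2 C \<alpha> = src2 C \<beta> \<longrightarrow> tgt2 C \<beta> = src2 C \<gamma> \<longrightarrow>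
        vcomp C \<gamma> (vcomp C \<beta> \<alpha>) = vcomp C (vcomp C \<gamma> \<beta>) \<alpha>) \<and>
    (\<forall>\<alpha>\<in>Hom2 C. vcomp C \<alpha> (id2 C (src2 C \<alpha>)) = \<alpha> \<and> vcomp C (id2 C (tgt2 C \<alpha>)) \<alpha> = \<alpha>) \<and>
    \<comment> \<open>horizontal structure\<close>
    (\<forall>\<alpha>\<in>Hom2 C. \<forall>\<gamma>\<in>Hom2 C. tgt1 C (src2 C \<alpha>) = src1 C (src2 C \<gamma>) \<longrightarrow>
        hcomp C \<gamma> \<alpha> \<in> Hom2 C \<and>
        src2 C (hcomp C \<gamma> \<alpha>) = comp1 C (src2 C \<gamma>) (src2 C \<alpha>) \<and>
        tgt2 C (hcomp C \<gamma> \<alpha>) = comp1 C (tgt2 C \<gamma>) (tgt2 C \<alpha>)) \<and>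
    (\<forall>\<alpha>\<in>Hom2 C. \<forall>\<gamma>\<in>Hom2 C. \<forall>\<delta>\<in>Hom2 C.
        tgt1 C (src2 C \<alpha>) = src1 C (src2 C \<gamma>) \<longrightarrow> tgt1 C (src2 C \<gamma>) = src1 C (src2 C \<delta>) \<longrightarrow>
        hcomp C \<delta> (hcomp C \<gamma> \<alpha>) = hcomp C (hcomp C \<delta> \<gamma>) \<alpha>) \<and>
    (\<forall>\<alpha>\<in>Hom2 C. hcomp C (id2 C (id1 C (tgt1 C (src2 C \<alpha>)))) \<alpha> = \<alpha> \<and>
        hcomp C \<alpha> (id2 C (id1 C (src1 C (src2 C \<alpha>)))) = \<alpha>) \<and>
    (\<forall>f\<in>Hom1 C. \<forall>g\<in>Hom1 C. tgt1 C f = src1 C g \<longrightarrow>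
        hcomp C (id2 C g) (id2 C f) = id2 C (comp1 C g f)) \<and>
    \<comment> \<open>interchange law\<close>
    (\<forall>\<alpha>\<in>Hom2 C. \<forall>\<beta>\<in>Hom2 C. \<forall>\<gamma>\<in>Hom2 C. \<forall>\<delta>\<in>Hom2 C.
        tgt2 C \<alpha> = src2 C \<beta> \<longrightarrow> tgt2 C \<gamma> = src2 C \<delta> \<longrightarrow>
        tgt1 C (src2 C \<alpha>) = src1 C (src2 C \<gamma>) \<longrightarrow>
        hcomp C (vcomp C \<delta> \<gamma>) (vcomp C \<beta> \<alpha>) = vcomp C (hcomp C \<delta> \<beta>) (hcomp C \<gamma> \<alpha>))"

definition lawvere_2weight ::
  "('o, 'a, 'b, 'e) two_cat_scheme \<Rightarrow> ('a \<Rightarrow> real) \<Rightarrow> ('b \<Rightarrow> real) \<Rightarrow> bool" where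
  "lawvere_2weight C W1 W2 \<longleftrightarrow>
    (\<forall>f\<in>Hom1 C. W1 f \<ge> 0) \<and> (\<forall>\<alpha>\<in>Hom2 C. W2 \<alpha> \<ge> 0) \<and>
    (\<forall>A\<in>Ob C. W1 (id1 C A) = 0) \<and>
    (\<forall>f\<in>Hom1 C. W2 (id2 C f) = 0) \<and>
    (\<forall>f\<in>Hom1 C. \<forall>g\<in>Hom1 C. tgt1 C f = src1 C g \<longrightarrow> W1 (comp1 C g f) \<le> W1 g + W1 f) \<and>
    (\<forall>\<alpha>\<in>Hom2 C. \<forall>\<beta>\<in>Hom2 C. tgt2 C \<alpha> = src2 C \<beta> \<longrightarrow> W2 (vcomp C \<beta> \<alpha>) \<le> W2 \<beta> + W2 \<alpha>) \<and>
    (\<forall>\<alpha>\<in>Hom2 C. \<forall>\<gamma>\<in>Hom2 C. tgt1 C (src2 C \<alpha>) = src1 C (src2 C \<gamma>) \<longrightarrow>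
        W2 (hcomp C \<gamma> \<alpha>) \<le> W2 \<gamma> + W2 \<alpha>)"

definition interleaved ::
  "('o, 'a, 'b, 'e) two_cat_scheme \<Rightarrow> ('a \<Rightarrow> real) \<Rightarrow> ('b \<Rightarrow> real) \<Rightarrow> 'o \<Rightarrow> 'o \<Rightarrow> real \<Rightarrow> bool" where
  "interleaved C W1 W2 A B t \<longleftrightarrow>
    (\<exists>g h \<alpha> \<beta>. g \<in> Hom1 C \<and> src1 C g = A \<and> tgt1 C g = B \<and>
               h \<in> Hom1 C \<and> src1 C h = B \<and> tgt1 C h = A \<and>
               \<alpha> \<in> Hom2 C \<and> src2 C \<alpha> = id1 C A \<and> tgt2 C \<alpha> = comp1 C h g \<and>
               \<beta> \<in> Hom2 C \<and> src2 C \<beta> = id1 C B \<and> tgt2 C \<beta> = comp1 C g h \<and>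
               max (max (W1 g) (W1 h)) (max (W2 \<alpha>) (W2 \<beta>)) \<le> t)"

text \<open>Interleaving distance, valued in [0,\<infinity>] (ennreal); Inf of the empty set is \<infinity>.\<close>

definition interleaving_dist ::
  "('o, 'a, 'b, 'e) two_cat_scheme \<Rightarrow> ('a \<Rightarrow> real) \<Rightarrow> ('b \<Rightarrow> real) \<Rightarrow> 'o \<Rightarrow> 'o \<Rightarrow> ennreal" where
  "interleaving_dist C W1 W2 A B = Inf {ennreal t | t. t \<ge> 0 \<and> interleaved C W1 W2 A B t}"

definition extended_pseudometric :: "'o set \<Rightarrow> ('o \<Rightarrow> 'o \<Rightarrow> ennreal) \<Rightarrow> bool" where
  "extended_pseudometric S d \<longleftrightarrow>
    (\<forall>x\<in>S. d x x = 0) \<and>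
    (\<forall>x\<in>S. \<forall>y\<in>S. d x y = d y x) \<and>
    (\<forall>x\<in>S. \<forall>y\<in>S. \<forall>z\<in>S. d x z \<le> d x y + d y z)"

end

theory Submission
  imports Defs
begin

text \<open>Identities give a 0-interleaving of an object with itself, and an interleaving
is symmetric in its two objects. An \<open>s\<close>-interleaving \<open>(g, h, \<alpha>, \<beta>)\<close> of \<open>A\<close>, \<open>B\<close> and a
\<open>t\<close>-interleaving \<open>(g', h', \<alpha>', \<beta>')\<close> of \<open>B\<close>, \<open>D\<close> compose to the \<open>(s + t)\<close>-interleaving
\<open>(g' g, h h', (h \<alpha>' g) \<alpha>, (g' \<beta> h') \<beta>')\<close>: subadditivity bounds the weights, and whiskering
with identity 2-cells costs nothing because they have weight 0. Passing to infima
turns these three facts into the axioms of an extended pseudometric.\<close>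

lemma INF_add_const_ennreal:
  fixes c :: ennreal
  assumes "S \<noteq> {}"
  shows "(INF x\<in>S. x + c) = Inf S + c"
proof -
  have "continuous (at_right (Inf S)) (\<lambda>x. x + c)"
    by (intro continuous_add continuous_ident continuous_const)
  then show ?thesis
    using continuous_at_Inf_mono[of "\<lambda>x. x + c" S] assms by (auto simp: mono_def)
qed

lemma Inf_le_Inf_add_Inf_ennreal:
  fixes S T U :: "ennreal set"
  assumes "\<And>s t. s \<in> S \<Longrightarrow> t \<in> T \<Longrightarrow> Inf U \<le> s + t"
  shows "Inf U \<le> Inf S + Inf T"
proof (cases "S = {} \<or> T = {}")
  case True
  then show ?thesis by auto
next
  case False
  have "Inf U \<le> s + Inf T" if "s \<in> S" for s
  proof -
    have "Inf U \<le> (INF t\<in>T. t + s)"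
      using assms[OF that] by (intro INF_greatest) (simp add: add.commute)
    also have "\<dots> = Inf T + s"
      using False by (simp add: INF_add_const_ennreal)
    finally show ?thesis
      by (simp add: add.commute)
  qed
  then have "Inf U \<le> (INF s\<in>S. s + Inf T)"
    by (rule INF_greatest)
  also have "\<dots> = Inf S + Inf T"
    using False by (simp add: INF_add_const_ennreal)
  finally show ?thesis .
qed

lemma interleaved_sym:
  "interleaved C W1 W2 A B t \<Longrightarrow> interleaved C W1 W2 B A t"
  unfolding interleaved_def by (metis max.commute)

lemma interleaved_commute:
  "interleaved C W1 W2 A B t \<longleftrightarrow> interleaved C W1 W2 B A t"
  by (rule iffI) (erule interleaved_sym)+

lemma interleaving_dist_le:
  assumes "interleaved C W1 W2 A B t" and "0 \<le> t"
  shows "interleaving_dist C W1 W2 A B \<le> ennreal t"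
  unfolding interleaving_dist_def by (rule Inf_lower) (use assms in blast)

lemma interleaving_dist_commute:
  "interleaving_dist C W1 W2 A B = interleaving_dist C W1 W2 B A"
  unfolding interleaving_dist_def by (simp add: interleaved_commute)

locale weighted_two_category =
  fixes C :: "('o, 'a, 'b, 'e) two_cat_scheme"
    and W1 :: "'a \<Rightarrow> real" and W2 :: "'b \<Rightarrow> real"
  assumes two_category: "two_category C"
    and weight: "lawvere_2weight C W1 W2"
begin

lemma id1 [simp]:
  assumes "A \<in> Ob C"
  shows "id1 C A \<in> Hom1 C" "src1 C (id1 C A) = A" "tgt1 C (id1 C A) = A"
  using two_category[unfolded two_category_def] assms by simp_all

lemma Ob_src1_tgt1 [simp]:
  assumes "f \<in> Hom1 C"
  shows "src1 C f \<in> Ob C" "tgt1 C f \<in> Ob C"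
  using two_category[unfolded two_category_def] assms by simp_all

lemma comp1 [simp]:
  assumes "f \<in> Hom1 C" "g \<in> Hom1 C" "tgt1 C f = src1 C g"
  shows "comp1 C g f \<in> Hom1 C" "src1 C (comp1 C g f) = src1 C f"
    "tgt1 C (comp1 C g f) = tgt1 C g"
  using two_category[unfolded two_category_def] assms by simp_all

lemma comp1_assoc [simp]:
  assumes "f \<in> Hom1 C" "g \<in> Hom1 C" "h \<in> Hom1 C" "tgt1 C f = src1 C g" "tgt1 C g = src1 C h"
  shows "comp1 C h (comp1 C g f) = comp1 C (comp1 C h g) f"
  using two_category[unfolded two_category_def] assms by simp

lemma comp1_id1 [simp]:
  assumes "f \<in> Hom1 C"
  shows "src1 C f = A \<Longrightarrow> comp1 C f (id1 C A) = f"
    and "tgt1 C f = B \<Longrightarrow> comp1 C (id1 C B) f = f"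
proof -
  have "comp1 C f (id1 C (src1 C f)) = f" "comp1 C (id1 C (tgt1 C f)) f = f"
    using two_category[unfolded two_category_def] assms by simp_all
  then show "src1 C f = A \<Longrightarrow> comp1 C f (id1 C A) = f"
    and "tgt1 C f = B \<Longrightarrow> comp1 C (id1 C B) f = f"
    by blast+
qed

lemma id2 [simp]:
  assumes "f \<in> Hom1 C"
  shows "id2 C f \<in> Hom2 C" "src2 C (id2 C f) = f" "tgt2 C (id2 C f) = f"
  using two_category[unfolded two_category_def] assms by simp_all

lemma vcomp [simp]:
  assumes "\<alpha> \<in> Hom2 C" "\<beta> \<in> Hom2 C" "tgt2 C \<alpha> = src2 C \<beta>"
  shows "vcomp C \<beta> \<alpha> \<in> Hom2 C" "src2 C (vcomp C \<beta> \<alpha>) = src2 C \<alpha>"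
    "tgt2 C (vcomp C \<beta> \<alpha>) = tgt2 C \<beta>"
  using two_category[unfolded two_category_def] assms by simp_all

lemma hcomp [simp]:
  assumes "\<alpha> \<in> Hom2 C" "\<gamma> \<in> Hom2 C" "tgt1 C (src2 C \<alpha>) = src1 C (src2 C \<gamma>)"
  shows "hcomp C \<gamma> \<alpha> \<in> Hom2 C" "src2 C (hcomp C \<gamma> \<alpha>) = comp1 C (src2 C \<gamma>) (src2 C \<alpha>)"
    "tgt2 C (hcomp C \<gamma> \<alpha>) = comp1 C (tgt2 C \<gamma>) (tgt2 C \<alpha>)"
  using two_category[unfolded two_category_def] assms by simp_all

lemma W1_id1 [simp]: "A \<in> Ob C \<Longrightarrow> W1 (id1 C A) = 0"
  and W2_id2 [simp]: "f \<in> Hom1 C \<Longrightarrow> W2 (id2 C f) = 0"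
  and W1_comp1_le: "f \<in> Hom1 C \<Longrightarrow> g \<in> Hom1 C \<Longrightarrow> tgt1 C f = src1 C g \<Longrightarrow>
    W1 (comp1 C g f) \<le> W1 g + W1 f"
  and W2_vcomp_le: "\<alpha> \<in> Hom2 C \<Longrightarrow> \<beta> \<in> Hom2 C \<Longrightarrow> tgt2 C \<alpha> = src2 C \<beta> \<Longrightarrow>
    W2 (vcomp C \<beta> \<alpha>) \<le> W2 \<beta> + W2 \<alpha>"
  and W2_hcomp_le: "\<alpha> \<in> Hom2 C \<Longrightarrow> \<gamma> \<in> Hom2 C \<Longrightarrow> tgt1 C (src2 C \<alpha>) = src1 C (src2 C \<gamma>) \<Longrightarrow>
    W2 (hcomp C \<gamma> \<alpha>) \<le> W2 \<gamma> + W2 \<alpha>"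
  using weight unfolding lawvere_2weight_def by blast+

lemma W2_whisker_left_le:
  assumes "\<gamma> \<in> Hom2 C" "z \<in> Hom1 C" "tgt1 C (src2 C \<gamma>) = src1 C z"
  shows "W2 (hcomp C (id2 C z) \<gamma>) \<le> W2 \<gamma>"
  using W2_hcomp_le[of \<gamma> "id2 C z"] assms by simp

lemma W2_whisker_right_le:
  assumes "\<gamma> \<in> Hom2 C" "x \<in> Hom1 C" "tgt1 C x = src1 C (src2 C \<gamma>)"
  shows "W2 (hcomp C \<gamma> (id2 C x)) \<le> W2 \<gamma>"
  using W2_hcomp_le[of "id2 C x" \<gamma>] assms by simp

lemma interleaved_refl:
  assumes "A \<in> Ob C"
  shows "interleaved C W1 W2 A A 0"
  unfolding interleaved_def
  using assms by (intro exI[of _ "id1 C A"] exI[of _ "id2 C (id1 C A)"]) simp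

lemma composite_unit_2cell:
  assumes q: "q \<in> Hom1 C" "src1 C q = A" "tgt1 C q = B"
    and p: "p \<in> Hom1 C" "src1 C p = B" "tgt1 C p = A"
    and \<nu>: "\<nu> \<in> Hom2 C" "src2 C \<nu> = id1 C A" "tgt2 C \<nu> = comp1 C p q"
    and q': "q' \<in> Hom1 C" "src1 C q' = B" "tgt1 C q' = D"
    and p': "p' \<in> Hom1 C" "src1 C p' = D" "tgt1 C p' = B"
    and \<mu>: "\<mu> \<in> Hom2 C" "src2 C \<mu> = id1 C B" "tgt2 C \<mu> = comp1 C p' q'"
  shows "\<exists>\<nu>'. \<nu>' \<in> Hom2 C \<and> src2 C \<nu>' = id1 C A \<and>
    tgt2 C \<nu>' = comp1 C (comp1 C p p') (comp1 C q' q) \<and> W2 \<nu>' \<le> W2 \<mu> + W2 \<nu>"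
proof -
  have Ob: "A \<in> Ob C" "B \<in> Ob C"
    using q Ob_src1_tgt1 by metis+
  define \<mu>q where "\<mu>q = hcomp C \<mu> (id2 C q)"
  define p\<mu>q where "p\<mu>q = hcomp C (id2 C p) \<mu>q"
  have \<mu>q: "\<mu>q \<in> Hom2 C" "src2 C \<mu>q = q" "tgt2 C \<mu>q = comp1 C (comp1 C p' q') q"
    using Ob q \<mu> unfolding \<mu>q_def by simp_all
  have p\<mu>q: "p\<mu>q \<in> Hom2 C" "src2 C p\<mu>q = comp1 C p q"
    "tgt2 C p\<mu>q = comp1 C (comp1 C p p') (comp1 C q' q)"
    using Ob q p q' p' \<mu>q unfolding p\<mu>q_def by simp_all
  have "W2 (vcomp C p\<mu>q \<nu>) \<le> W2 p\<mu>q + W2 \<nu>"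
    using W2_vcomp_le[of \<nu> p\<mu>q] \<nu> p\<mu>q by simp
  also have "W2 p\<mu>q \<le> W2 \<mu>q"
    using W2_whisker_left_le[of \<mu>q p] \<mu>q q p unfolding p\<mu>q_def by simp
  also have "W2 \<mu>q \<le> W2 \<mu>"
    using W2_whisker_right_le[of \<mu> q] Ob \<mu> q unfolding \<mu>q_def by simp
  finally show ?thesis
    using \<nu> p\<mu>q by (intro exI[of _ "vcomp C p\<mu>q \<nu>"]) simp
qed

lemma interleaved_trans:
  assumes "interleaved C W1 W2 A B s" and "interleaved C W1 W2 B D t"
  shows "interleaved C W1 W2 A D (s + t)"
proof -
  obtain g h \<alpha> \<beta> where g: "g \<in> Hom1 C" "src1 C g = A" "tgt1 C g = B"
    and h: "h \<in> Hom1 C" "src1 C h = B" "tgt1 C h = A"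
    and \<alpha>: "\<alpha> \<in> Hom2 C" "src2 C \<alpha> = id1 C A" "tgt2 C \<alpha> = comp1 C h g"
    and \<beta>: "\<beta> \<in> Hom2 C" "src2 C \<beta> = id1 C B" "tgt2 C \<beta> = comp1 C g h"
    and s: "max (max (W1 g) (W1 h)) (max (W2 \<alpha>) (W2 \<beta>)) \<le> s"
    using assms(1) unfolding interleaved_def by blast
  obtain g' h' \<alpha>' \<beta>' where g': "g' \<in> Hom1 C" "src1 C g' = B" "tgt1 C g' = D"
    and h': "h' \<in> Hom1 C" "src1 C h' = D" "tgt1 C h' = B"
    and \<alpha>': "\<alpha>' \<in> Hom2 C" "src2 C \<alpha>' = id1 C B" "tgt2 C \<alpha>' = comp1 C h' g'"
    and \<beta>': "\<beta>' \<in> Hom2 C" "src2 C \<beta>' = id1 C D" "tgt2 C \<beta>' = comp1 C g' h'"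
    and t: "max (max (W1 g') (W1 h')) (max (W2 \<alpha>') (W2 \<beta>')) \<le> t"
    using assms(2) unfolding interleaved_def by blast
  obtain \<alpha>'' where \<alpha>'': "\<alpha>'' \<in> Hom2 C" "src2 C \<alpha>'' = id1 C A"
      "tgt2 C \<alpha>'' = comp1 C (comp1 C h h') (comp1 C g' g)" "W2 \<alpha>'' \<le> W2 \<alpha>' + W2 \<alpha>"
    using composite_unit_2cell[OF g h \<alpha> g' h' \<alpha>'] by blast
  obtain \<beta>'' where \<beta>'': "\<beta>'' \<in> Hom2 C" "src2 C \<beta>'' = id1 C D"
      "tgt2 C \<beta>'' = comp1 C (comp1 C g' g) (comp1 C h h')" "W2 \<beta>'' \<le> W2 \<beta> + W2 \<beta>'"
    using composite_unit_2cell[OF h' g' \<beta>' h g \<beta>] by blast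
  have "W1 (comp1 C g' g) \<le> W1 g' + W1 g" "W1 (comp1 C h h') \<le> W1 h + W1 h'"
    using W1_comp1_le g h g' h' by simp_all
  then show ?thesis
    unfolding interleaved_def using g h g' h' \<alpha>'' \<beta>'' s t
    by (intro exI[of _ "comp1 C g' g"] exI[of _ "comp1 C h h'"] exI[of _ \<alpha>''] exI[of _ \<beta>'']) simp
qed

lemma interleaving_dist_self:
  "A \<in> Ob C \<Longrightarrow> interleaving_dist C W1 W2 A A = 0"
  using interleaving_dist_le[OF interleaved_refl] by simp

lemma interleaving_dist_triangle:
  "interleaving_dist C W1 W2 A D \<le> interleaving_dist C W1 W2 A B + interleaving_dist C W1 W2 B D"
  unfolding interleaving_dist_def
proof (rule Inf_le_Inf_add_Inf_ennreal)
  fix x y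
  assume "x \<in> {ennreal s |s. 0 \<le> s \<and> interleaved C W1 W2 A B s}"
    and "y \<in> {ennreal t |t. 0 \<le> t \<and> interleaved C W1 W2 B D t}"
  then obtain s t where st: "x = ennreal s" "y = ennreal t" "0 \<le> s" "0 \<le> t"
    "interleaved C W1 W2 A B s" "interleaved C W1 W2 B D t"
    by blast
  then have "interleaving_dist C W1 W2 A D \<le> ennreal (s + t)"
    by (intro interleaving_dist_le[OF interleaved_trans]) auto
  then show "Inf {ennreal u |u. 0 \<le> u \<and> interleaved C W1 W2 A D u} \<le> x + y"
    using st by (simp add: interleaving_dist_def)
qed

end

theorem theorem5p3:
  fixes C :: "('o, 'a, 'b, 'e) two_cat_scheme"
    and W1 :: "'a \<Rightarrow> real" and W2 :: "'b \<Rightarrow> real"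
  assumes "two_category C"
    and "lawvere_2weight C W1 W2"
  shows "extended_pseudometric (Ob C) (interleaving_dist C W1 W2)"
proof -
  interpret weighted_two_category C W1 W2
    using assms by unfold_locales
  show ?thesis
    unfolding extended_pseudometric_def
    by (intro conjI ballI interleaving_dist_self interleaving_dist_commute interleaving_dist_triangle)
qed

end
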